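(* Let $(X,\leq)$ be a poset and $K$ a field. Then (1) $FI(X,K)$ is Lie nilpotent if and only if $X$ is an antichain; (2) the group of units $\mathcal{U}(FI(X,K))$ is nilpotent if and only if either $X$ is an antichain, or $K=\mathbb{F}_2$ and $X$ is bounded.
   Context: $FI(X,K)$ is the finitary incidence algebra: the $K$-vector space of formal sums $\alpha=\sum_{x\leq y}\alpha_{xy}e_{xy}$ ($x,y\in X$, $\alpha_{xy}\in K$) such that for every pair $x<y$ only finitely many $x\leq u<v\leq y$ have $\alpha_{uv}\neq0$, with convolution product $\alpha\beta=\sum_{x\leq y}\big(\sum_{x\leq z\leq y}\alpha_{xz}\beta_{zy}\big)e_{xy}$. An associative algebra $A$ is Lie nilpotent if $\gamma_n(A)=\{0\}$ for some $n$, where $\gamma_1(A)=A$, $\gamma_{n+1}(A)=[\gamma_n(A),A]$ (span of commutators $xy-yx$). $X$ is bounded if the supremum of $|C|-1$ over finite chains $C\subseteq X$ is finite. $\mathbb{F}_2$ is the field with two elements. *)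

theory Defs
  imports "HOL-Algebra.Algebra"
begin

text \<open>Elements of the finitary incidence algebra FI(X,K), X a poset (type of class order),
  K a field, represented as functions alpha x y = alpha_xy, vanishing unless x <= y.\<close>

definition FI :: "('a::order \<Rightarrow> 'a \<Rightarrow> 'k::field) set" where
  "FI = {f. (\<forall>x y. \<not> x \<le> y \<longrightarrow> f x y = 0) \<and>
            (\<forall>x y. x < y \<longrightarrow> finite {(u, v). x \<le> u \<and> u < v \<and> v \<le> y \<and> f u v \<noteq> 0})}"

text \<open>Convolution product; for elements of FI the summation set is finite.\<close>
definition conv :: "('a::order \<Rightarrow> 'a \<Rightarrow> 'k::field) \<Rightarrow> ('a \<Rightarrow> 'a \<Rightarrow> 'k) \<Rightarrow> 'a \<Rightarrow> 'a \<Rightarrow> 'k" where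
  "conv f g = (\<lambda>x y. if x \<le> y then
      (\<Sum>z\<in>{z. x \<le> z \<and> z \<le> y \<and> f x z \<noteq> 0 \<and> g z y \<noteq> 0}. f x z * g z y) else 0)"

definition delta :: "'a::order \<Rightarrow> 'a \<Rightarrow> 'k::field" where
  "delta = (\<lambda>x y. if x = y then 1 else 0)"

inductive_set kspan :: "('a \<Rightarrow> 'a \<Rightarrow> 'k::field) set \<Rightarrow> ('a \<Rightarrow> 'a \<Rightarrow> 'k) set"
  for S where
  kspan_zero: "(\<lambda>x y. 0) \<in> kspan S"
| kspan_step: "s \<in> S \<Longrightarrow> t \<in> kspan S \<Longrightarrow> (\<lambda>x y. c * s x y + t x y) \<in> kspan S"

text \<open>Lower central series of the Lie algebra FI(X,K): lie_gamma n = gamma_(n+1).\<close>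
fun lie_gamma :: "nat \<Rightarrow> ('a::order \<Rightarrow> 'a \<Rightarrow> 'k::field) set" where
  "lie_gamma 0 = FI"
| "lie_gamma (Suc n) =
     kspan {(\<lambda>x y. conv a b x y - conv b a x y) | a b. a \<in> lie_gamma n \<and> b \<in> FI}"

definition lie_nilpotent_FI :: "'a::order itself \<Rightarrow> 'k::field itself \<Rightarrow> bool" where
  "lie_nilpotent_FI _ _ \<longleftrightarrow> (\<exists>n. (lie_gamma n :: ('a \<Rightarrow> 'a \<Rightarrow> 'k) set) = {\<lambda>x y. 0})"

definition FI_monoid :: "('a::order \<Rightarrow> 'a \<Rightarrow> 'k::field) monoid" where
  "FI_monoid = \<lparr>carrier = FI, Group.monoid.mult = conv, one = delta\<rparr>"

fun lcs :: "('g, 'b) monoid_scheme \<Rightarrow> nat \<Rightarrow> 'g set" where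
  "lcs G 0 = carrier G"
| "lcs G (Suc n) = generate G
     {x \<otimes>\<^bsub>G\<^esub> y \<otimes>\<^bsub>G\<^esub> inv\<^bsub>G\<^esub> x \<otimes>\<^bsub>G\<^esub> inv\<^bsub>G\<^esub> y | x y. x \<in> lcs G n \<and> y \<in> carrier G}"

definition nilpotent_group :: "('g, 'b) monoid_scheme \<Rightarrow> bool" where
  "nilpotent_group G \<longleftrightarrow> (\<exists>n. lcs G n = {\<one>\<^bsub>G\<^esub>})"

definition antichain_type :: "'a::order itself \<Rightarrow> bool" where
  "antichain_type _ \<longleftrightarrow> (\<forall>x y :: 'a. x \<le> y \<longrightarrow> x = y)"

text \<open>Bounded: sup of |C|-1 over finite chains C is finite.\<close>
definition bounded_poset :: "'a::order itself \<Rightarrow> bool" where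
  "bounded_poset _ \<longleftrightarrow> (\<exists>N::nat. \<forall>C :: 'a set. finite C \<and> (\<forall>x\<in>C. \<forall>y\<in>C. x \<le> y \<or> y \<le> x)
      \<longrightarrow> card C \<le> N + 1)"

end

theory Submission
  imports Defs
begin

text \<open>
  If \<open>X\<close> is an antichain, \<open>FI(X,K)\<close> is commutative, so both its Lie algebra and its unit group
  are abelian. Otherwise pick \<open>a < b\<close>. The matrix unit \<open>e\<^sub>a\<^sub>b\<close> satisfies
  \<open>[e\<^sub>a\<^sub>b, e\<^sub>b\<^sub>b] = e\<^sub>a\<^sub>b\<close>, so it lies in every term of the lower central series of the
  Lie algebra. In the unit group, if \<open>K\<close> contains some \<open>c \<notin> {0, 1}\<close>, commuting
  \<open>1 + t e\<^sub>a\<^sub>b\<close> with the diagonal unit having \<open>c\<close> at \<open>a\<close> gives \<open>1 + t(1 - c) e\<^sub>a\<^sub>b\<close>,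
  so \<open>1 + (1 - c)\<^sup>n e\<^sub>a\<^sub>b \<noteq> 1\<close> lies in \<open>\<gamma>\<^sub>n\<close>; if \<open>X\<close> is unbounded,
  \<open>[1 + e\<^sub>a\<^sub>b, 1 + e\<^sub>b\<^sub>c] = 1 + e\<^sub>a\<^sub>c\<close> turns a chain of length \<open>n + 1\<close> into a nontrivial
  transvection in \<open>\<gamma>\<^sub>n\<close>.

  Conversely, over \<open>\<bbbF>\<^sub>2\<close> every unit has the form \<open>1 + a\<close> with \<open>a\<close> strictly upper
  triangular. Let \<open>J\<^sub>k\<close> consist of the elements supported on pairs \<open>u \<le> v\<close> whose interval
  \<open>[u, v]\<close> contains a chain of length \<open>k\<close>. Then \<open>J\<^sub>i J\<^sub>j \<subseteq> J\<^sub>i\<^sub>+\<^sub>j\<close>, the units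
  in \<open>1 + J\<^sub>k\<close> form subgroups \<open>U\<^sub>k\<close> with \<open>[U\<^sub>k, U\<^sub>1] \<subseteq> U\<^sub>k\<^sub>+\<^sub>1\<close>, and
  \<open>U\<^sub>1\<close> is the whole group; hence \<open>\<gamma>\<^sub>n \<subseteq> U\<^sub>n\<^sub>+\<^sub>1\<close>, which is trivial once
  \<open>n + 1\<close> exceeds the lengths of all chains.
\<close>

section \<open>The incidence algebra\<close>

lemma FI_eq_0: "f \<in> FI \<Longrightarrow> \<not> u \<le> v \<Longrightarrow> f u v = 0"
  by (simp add: FI_def)

lemma FI_finite_support:
  "f \<in> FI \<Longrightarrow> x < y \<Longrightarrow> finite {(u, v). x \<le> u \<and> u < v \<and> v \<le> y \<and> f u v \<noteq> 0}"
  by (simp add: FI_def)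

lemma FI_I:
  assumes "\<And>u v. \<not> u \<le> v \<Longrightarrow> f u v = 0"
    and "\<And>x y. x < y \<Longrightarrow> finite {(u, v). x \<le> u \<and> u < v \<and> v \<le> y \<and> f u v \<noteq> 0}"
  shows "f \<in> FI"
  using assms by (simp add: FI_def)

lemma FI_if_finite_off_diagonal:
  assumes "\<And>u v. f u v \<noteq> 0 \<Longrightarrow> u \<le> v" and "finite {(u, v). u \<noteq> v \<and> f u v \<noteq> 0}"
  shows "f \<in> FI"
proof (rule FI_I)
  show "\<not> u \<le> v \<Longrightarrow> f u v = 0" for u v
    using assms(1) by blast
  show "finite {(u, v). x \<le> u \<and> u < v \<and> v \<le> y \<and> f u v \<noteq> 0}" for x y
    by (rule finite_subset[OF _ assms(2)]) auto
qed

lemma FI_finite_row: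
  assumes "f \<in> FI" shows "finite {z. x \<le> z \<and> z \<le> y \<and> f x z \<noteq> 0}"
proof (cases "x < y")
  case True
  have "{z. x \<le> z \<and> z \<le> y \<and> f x z \<noteq> 0}
      \<subseteq> insert x (snd ` {(u, v). x \<le> u \<and> u < v \<and> v \<le> y \<and> f u v \<noteq> 0})"
    by (force simp: order.order_iff_strict)
  then show ?thesis
    using FI_finite_support[OF assms True] by (auto elim: finite_subset)
next
  case False
  then have "{z. x \<le> z \<and> z \<le> y \<and> f x z \<noteq> 0} \<subseteq> {x}"
    using order.strict_iff_order order_trans by fastforce
  then show ?thesis by (rule finite_subset) simp
qed

lemma FI_finite_column:
  assumes "f \<in> FI" shows "finite {z. x \<le> z \<and> z \<le> y \<and> f z y \<noteq> 0}"
proof (cases "x < y")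
  case True
  have "{z. x \<le> z \<and> z \<le> y \<and> f z y \<noteq> 0}
      \<subseteq> insert y (fst ` {(u, v). x \<le> u \<and> u < v \<and> v \<le> y \<and> f u v \<noteq> 0})"
    by (force simp: order.order_iff_strict)
  then show ?thesis
    using FI_finite_support[OF assms True] by (auto elim: finite_subset)
next
  case False
  then have "{z. x \<le> z \<and> z \<le> y \<and> f z y \<noteq> 0} \<subseteq> {y}"
    using order.strict_iff_order order_trans by fastforce
  then show ?thesis by (rule finite_subset) simp
qed

lemma conv_eq_0: "\<not> u \<le> v \<Longrightarrow> conv f g u v = 0"
  by (simp add: conv_def)

lemma conv_nonzeroE:
  assumes "conv f g u v \<noteq> 0"
  obtains z where "u \<le> z" "z \<le> v" "f u z \<noteq> 0" "g z v \<noteq> 0"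
proof (rule ccontr)
  assume "\<not> thesis"
  then have "conv f g u v = 0"
    using that unfolding conv_def by (auto intro!: sum.neutral)
  with assms show False by contradiction
qed

lemma conv_eq_sum:
  assumes "\<And>u v. \<not> u \<le> v \<Longrightarrow> f u v = 0" "\<And>u v. \<not> u \<le> v \<Longrightarrow> g u v = 0"
    and "finite I" "{z. x \<le> z \<and> z \<le> y \<and> f x z \<noteq> 0 \<and> g z y \<noteq> 0} \<subseteq> I"
  shows "conv f g x y = (\<Sum>z\<in>I. f x z * g z y)"
proof (cases "x \<le> y")
  case True
  then have "conv f g x y = (\<Sum>z\<in>{z. x \<le> z \<and> z \<le> y \<and> f x z \<noteq> 0 \<and> g z y \<noteq> 0}. f x z * g z y)"
    by (simp add: conv_def)
  also have "\<dots> = (\<Sum>z\<in>I. f x z * g z y)"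
    by (rule sum.mono_neutral_left[OF assms(3,4)]) (use assms(1,2) in auto)
  finally show ?thesis .
next
  case False
  then have "f x z * g z y = 0" for z
    using assms(1,2) order_trans by (metis mult_eq_0_iff)
  then show ?thesis using False by (simp add: conv_def sum.neutral)
qed

lemma conv_eq_sum_row:
  assumes "f \<in> FI" "g \<in> FI" "finite I" "{z. x \<le> z \<and> z \<le> y \<and> f x z \<noteq> 0} \<subseteq> I"
  shows "conv f g x y = (\<Sum>z\<in>I. f x z * g z y)"
  by (rule conv_eq_sum) (use assms FI_eq_0 in auto)

lemma conv_eq_sum_column:
  assumes "f \<in> FI" "g \<in> FI" "finite I" "{z. x \<le> z \<and> z \<le> y \<and> g z y \<noteq> 0} \<subseteq> I"
  shows "conv f g x y = (\<Sum>z\<in>I. f x z * g z y)"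
  by (rule conv_eq_sum) (use assms FI_eq_0 in auto)

lemma conv_FI:
  assumes f: "f \<in> FI" and g: "g \<in> FI" shows "conv f g \<in> FI"
proof (rule FI_I)
  show "\<not> u \<le> v \<Longrightarrow> conv f g u v = 0" for u v by (rule conv_eq_0)
  fix x y :: 'a assume xy: "x < y"
  let ?P = "\<lambda>h. {(u, v). x \<le> u \<and> u < v \<and> v \<le> y \<and> h u v \<noteq> 0}"
  let ?Q = "?P f \<union> ?P g \<union> (\<lambda>((u, _), (_, v)). (u, v)) ` (?P f \<times> ?P g)"
  have "(u, v) \<in> ?Q" if uv: "x \<le> u" "u < v" "v \<le> y" "conv f g u v \<noteq> 0" for u v
  proof -
    obtain z where z: "u \<le> z" "z \<le> v" "f u z \<noteq> 0" "g z v \<noteq> 0"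
      using conv_nonzeroE[OF uv(4)] .
    consider "z = u" | "z = v" | "u < z" "z < v"
      using z(1,2) by (auto simp: order.order_iff_strict)
    then show ?thesis
    proof cases
      case 3
      then have "((u, z), (z, v)) \<in> ?P f \<times> ?P g"
        using uv z by (auto intro: order_trans)
      then show ?thesis by force
    qed (use uv z in auto)
  qed
  then have "?P (conv f g) \<subseteq> ?Q" by blast
  moreover have "finite ?Q"
    using FI_finite_support[OF f xy] FI_finite_support[OF g xy] by blast
  ultimately show "finite (?P (conv f g))" by (rule finite_subset)
qed

lemma conv_assoc:
  assumes f: "f \<in> FI" and g: "g \<in> FI" and h: "h \<in> FI"
  shows "conv (conv f g) h = conv f (conv g h)"
proof (intro ext)
  fix x y :: 'a
  define I where "I = {w. x \<le> w \<and> w \<le> y \<and> f x w \<noteq> 0} \<union> {w. x \<le> w \<and> w \<le> y \<and> h w y \<noteq> 0}"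
  have I: "finite I" unfolding I_def using FI_finite_row[OF f] FI_finite_column[OF h] by blast
  have "conv (conv f g) h x y = (\<Sum>z\<in>I. conv f g x z * h z y)"
    by (rule conv_eq_sum_column[OF conv_FI[OF f g] h I]) (auto simp: I_def)
  also have "\<dots> = (\<Sum>z\<in>I. (\<Sum>w\<in>I. f x w * g w z) * h z y)"
  proof (rule sum.cong[OF refl])
    fix z assume "z \<in> I"
    then have "conv f g x z = (\<Sum>w\<in>I. f x w * g w z)"
      by (intro conv_eq_sum_row[OF f g I]) (auto simp: I_def intro: order_trans)
    then show "conv f g x z * h z y = (\<Sum>w\<in>I. f x w * g w z) * h z y" by simp
  qed
  also have "\<dots> = (\<Sum>w\<in>I. f x w * (\<Sum>z\<in>I. g w z * h z y))"
    by (simp add: sum_distrib_left sum_distrib_right mult.assoc) (rule sum.swap)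
  also have "\<dots> = (\<Sum>w\<in>I. f x w * conv g h w y)"
  proof (rule sum.cong[OF refl])
    fix w assume "w \<in> I"
    then have "conv g h w y = (\<Sum>z\<in>I. g w z * h z y)"
      by (intro conv_eq_sum_column[OF g h I]) (auto simp: I_def intro: order_trans)
    then show "f x w * (\<Sum>z\<in>I. g w z * h z y) = f x w * conv g h w y" by simp
  qed
  also have "\<dots> = conv f (conv g h) x y"
    by (rule conv_eq_sum_row[OF f conv_FI[OF g h] I, symmetric]) (auto simp: I_def)
  finally show "conv (conv f g) h x y = conv f (conv g h) x y" .
qed

lemma delta_FI: "delta \<in> FI"
  by (rule FI_if_finite_off_diagonal) (auto simp: delta_def split: if_splits)

lemma conv_delta_left: "f \<in> FI \<Longrightarrow> conv delta f = f"
  by (intro ext, subst conv_eq_sum_row[OF delta_FI _ finite.emptyI[THEN finite.insertI]])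
    (auto simp: delta_def)

lemma conv_delta_right: "f \<in> FI \<Longrightarrow> conv f delta = f"
  by (intro ext, subst conv_eq_sum_column[OF _ delta_FI finite.emptyI[THEN finite.insertI]])
    (auto simp: delta_def)

lemma conv_diag: "f \<in> FI \<Longrightarrow> g \<in> FI \<Longrightarrow> conv f g u u = f u u * g u u"
  by (subst conv_eq_sum_row[where I = "{u}"]) auto

lemma diff_FI: "f \<in> FI \<Longrightarrow> g \<in> FI \<Longrightarrow> (\<lambda>u v. f u v - g u v) \<in> FI"
proof (rule FI_I)
  assume f: "f \<in> FI" and g: "g \<in> FI"
  show "\<not> u \<le> v \<Longrightarrow> f u v - g u v = 0" for u v using FI_eq_0[OF f] FI_eq_0[OF g] by simp
  show "finite {(u, v). x \<le> u \<and> u < v \<and> v \<le> y \<and> f u v - g u v \<noteq> 0}" if "x < y" for x y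
    by (rule finite_subset[OF _ finite_UnI[OF FI_finite_support[OF f that] FI_finite_support[OF g that]]])
      auto
qed

lemma conv_diff_left:
  assumes f: "f \<in> FI" and g: "g \<in> FI" and h: "h \<in> FI"
  shows "conv (\<lambda>u v. f u v - g u v) h = (\<lambda>u v. conv f h u v - conv g h u v)"
proof (intro ext)
  fix x y :: 'a
  define I where "I = {z. x \<le> z \<and> z \<le> y \<and> h z y \<noteq> 0}"
  have I: "finite I" unfolding I_def using FI_finite_column[OF h] .
  show "conv (\<lambda>u v. f u v - g u v) h x y = conv f h x y - conv g h x y"
    using I by (simp add: conv_eq_sum_column[OF _ h I] diff_FI f g I_def left_diff_distrib sum_subtractf)
qed

lemma conv_diff_right:
  assumes f: "f \<in> FI" and g: "g \<in> FI" and h: "h \<in> FI"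
  shows "conv h (\<lambda>u v. f u v - g u v) = (\<lambda>u v. conv h f u v - conv h g u v)"
proof (intro ext)
  fix x y :: 'a
  define I where "I = {z. x \<le> z \<and> z \<le> y \<and> h x z \<noteq> 0}"
  have I: "finite I" unfolding I_def using FI_finite_row[OF h] .
  show "conv h (\<lambda>u v. f u v - g u v) x y = conv h f x y - conv h g x y"
    using I by (simp add: conv_eq_sum_row[OF h _ I] diff_FI f g I_def right_diff_distrib sum_subtractf)
qed

lemma conv_expand_at_delta:
  assumes x: "x \<in> FI" and y: "y \<in> FI"
  shows "conv x y u v = delta u v + (x u v - delta u v) + (y u v - delta u v)
           + conv (\<lambda>u v. x u v - delta u v) (\<lambda>u v. y u v - delta u v) u v"
  using conv_diff_left[OF x delta_FI diff_FI[OF y delta_FI]] conv_diff_right[OF y delta_FI x]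
    conv_diff_right[OF y delta_FI delta_FI]
  by (simp add: conv_delta_left conv_delta_right x y delta_FI diff_FI fun_eq_iff)

section \<open>The unit group\<close>

lemma monoid_FI_monoid: "monoid (FI_monoid :: ('a::order \<Rightarrow> 'a \<Rightarrow> 'k::field) monoid)"
  by (rule monoidI)
    (auto simp: FI_monoid_def conv_FI delta_FI conv_assoc conv_delta_left conv_delta_right)

abbreviation FI_units :: "('a::order \<Rightarrow> 'a \<Rightarrow> 'k::field) monoid" where
  "FI_units \<equiv> units_of FI_monoid"

interpretation FI_units: group "FI_units :: ('a::order \<Rightarrow> 'a \<Rightarrow> 'k::field) monoid"
  by (rule monoid.units_group[OF monoid_FI_monoid])

lemma FI_units_mult: "x \<otimes>\<^bsub>FI_units\<^esub> y = conv x y"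
  by (simp add: units_of_def FI_monoid_def)

lemma FI_units_one: "\<one>\<^bsub>FI_units\<^esub> = delta"
  by (simp add: units_of_def FI_monoid_def)

lemma FI_units_in_FI: "x \<in> carrier FI_units \<Longrightarrow> x \<in> FI"
  by (simp add: units_of_carrier Units_def FI_monoid_def)

lemma FI_units_r_inv: "x \<in> carrier FI_units \<Longrightarrow> conv x (inv\<^bsub>FI_units\<^esub> x) = delta"
  using FI_units.r_inv by (simp add: FI_units_mult FI_units_one)

lemma FI_units_inv_eq:
  assumes "f \<in> FI" "g \<in> FI" "conv f g = delta" "conv g f = delta"
  shows "f \<in> carrier FI_units" "inv\<^bsub>FI_units\<^esub> f = g"
proof -
  show f: "f \<in> carrier FI_units"
    using assms by (auto simp: units_of_carrier Units_def FI_monoid_def)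
  have "g \<in> carrier FI_units"
    using assms by (auto simp: units_of_carrier Units_def FI_monoid_def)
  with f show "inv\<^bsub>FI_units\<^esub> f = g"
    using FI_units.inv_equality assms(4) by (simp add: FI_units_mult FI_units_one)
qed

lemma FI_units_diag_nonzero:
  assumes "x \<in> carrier FI_units" shows "x u u \<noteq> 0"
proof -
  have "inv\<^bsub>FI_units\<^esub> x \<in> FI"
    using FI_units.inv_closed[OF assms] by (rule FI_units_in_FI)
  then have "x u u * (inv\<^bsub>FI_units\<^esub> x) u u = 1"
    using conv_diag[OF FI_units_in_FI[OF assms]] FI_units_r_inv[OF assms] by (metis delta_def)
  then show ?thesis by auto
qed

section \<open>Lower central series\<close>

definition commutator :: "('g, 'b) monoid_scheme \<Rightarrow> 'g \<Rightarrow> 'g \<Rightarrow> 'g" where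
  "commutator G x y = x \<otimes>\<^bsub>G\<^esub> y \<otimes>\<^bsub>G\<^esub> inv\<^bsub>G\<^esub> x \<otimes>\<^bsub>G\<^esub> inv\<^bsub>G\<^esub> y"

lemma lcs_Suc_commutator:
  "lcs G (Suc n) = generate G {commutator G x y | x y. x \<in> lcs G n \<and> y \<in> carrier G}"
  by (simp add: commutator_def)

lemma commutator_in_lcs_Suc:
  "x \<in> lcs G n \<Longrightarrow> y \<in> carrier G \<Longrightarrow> commutator G x y \<in> lcs G (Suc n)"
  unfolding lcs_Suc_commutator by (blast intro: generate.incl)

lemma (in group) lcs_Suc_subset_subgroup:
  assumes "subgroup H G" and "\<And>x y. x \<in> lcs G n \<Longrightarrow> y \<in> carrier G \<Longrightarrow> commutator G x y \<in> H"
  shows "lcs G (Suc n) \<subseteq> H"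
  unfolding lcs_Suc_commutator by (rule generate_subgroup_incl) (use assms in auto)

lemma (in monoid) one_in_lcs: "\<one> \<in> lcs G n"
  by (cases n) (auto intro: generate.one)

lemma (in monoid) nilpotent_group_iff: "nilpotent_group G \<longleftrightarrow> (\<exists>n. lcs G n \<subseteq> {\<one>})"
  using one_in_lcs by (auto simp: nilpotent_group_def)

lemma (in comm_group) nilpotent_group: "nilpotent_group G"
proof -
  have "commutator G x y = \<one>" if "x \<in> carrier G" "y \<in> carrier G" for x y
    using that by (simp add: commutator_def m_comm[of x y] m_assoc)
  then have "lcs G (Suc 0) \<subseteq> {\<one>}"
    by (intro lcs_Suc_subset_subgroup triv_subgroup) simp
  then show ?thesis using nilpotent_group_iff by blast
qed

section \<open>Chains in intervals\<close>

inductive interval_chain :: "nat \<Rightarrow> 'a::order \<Rightarrow> 'a \<Rightarrow> bool" where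
  interval_chain_0: "u \<le> v \<Longrightarrow> interval_chain 0 u v"
| interval_chain_Suc: "interval_chain k u w \<Longrightarrow> w < v \<Longrightarrow> interval_chain (Suc k) u v"

lemma interval_chain_less: "u < v \<Longrightarrow> interval_chain (Suc 0) u v"
  by (blast intro: interval_chain.intros)

lemma interval_chain_le_right: "interval_chain k u w \<Longrightarrow> w \<le> v \<Longrightarrow> interval_chain k u v"
  by (cases rule: interval_chain.cases) (auto intro: interval_chain.intros order_trans order.strict_trans2)

lemma interval_chain_SucD: "interval_chain (Suc k) u v \<Longrightarrow> interval_chain k u v"
  by (cases rule: interval_chain.cases) (auto intro: interval_chain_le_right)

lemma interval_chain_mono: "interval_chain m u v \<Longrightarrow> k \<le> m \<Longrightarrow> interval_chain k u v"
  by (induction m) (auto simp: le_Suc_eq dest: interval_chain_SucD)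

lemma interval_chain_add:
  "interval_chain j w v \<Longrightarrow> interval_chain i u w \<Longrightarrow> interval_chain (i + j) u v"
  by (induction rule: interval_chain.induct) (auto intro: interval_chain_le_right interval_chain_Suc)
lemma interval_chain_imp_finite_chain:
  "interval_chain k u v \<Longrightarrow>
     \<exists>C. finite C \<and> card C = Suc k \<and> (\<forall>x\<in>C. \<forall>y\<in>C. x \<le> y \<or> y \<le> x) \<and> (\<forall>c\<in>C. c \<le> v)"
proof (induction rule: interval_chain.induct)
  case (interval_chain_0 u v)
  show ?case by (intro exI[of _ "{v}"]) simp
next
  case (interval_chain_Suc k u w v)
  then obtain C where C: "finite C" "card C = Suc k" "\<forall>x\<in>C. \<forall>y\<in>C. x \<le> y \<or> y \<le> x" "\<forall>c\<in>C. c \<le> w"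
    by blast
  have less: "c < v" if "c \<in> C" for c
    using C(4) that interval_chain_Suc.hyps(2) order.strict_trans1 by blast
  then have "v \<notin> C" by blast
  then have "card (insert v C) = Suc (Suc k)"
    using C(1,2) by simp
  moreover have "\<forall>x\<in>insert v C. \<forall>y\<in>insert v C. x \<le> y \<or> y \<le> x"
    using C(3) less by (blast intro: order.strict_implies_order)
  moreover have "\<forall>c\<in>insert v C. c \<le> v"
    using less by (blast intro: order.strict_implies_order)
  ultimately show ?case
    using C(1) by (intro exI[of _ "insert v C"]) simp
qed

lemma finite_chain_imp_interval_chain:
  "finite C \<Longrightarrow> card C = Suc n \<Longrightarrow> \<forall>x\<in>C. \<forall>y\<in>C. x \<le> y \<or> y \<le> x \<Longrightarrow>
     \<exists>a. \<exists>b\<in>C. interval_chain n a (b::'a::order)"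
proof (induction n arbitrary: C)
  case 0
  then obtain b where "C = {b}" by (auto simp: card_Suc_eq)
  then show ?case by (blast intro: interval_chain_0)
next
  case (Suc n)
  have "C \<noteq> {}" using Suc.prems(2) by auto
  then obtain m where m: "m \<in> C" "\<And>c. c \<in> C \<Longrightarrow> m \<le> c \<Longrightarrow> m = c"
    using finite_has_maximal[OF Suc.prems(1)] by blast
  obtain a b where b: "b \<in> C" "b \<noteq> m" "interval_chain n a b"
    using Suc.IH[of "C - {m}"] Suc.prems m(1) by auto
  have "b < m"
    using Suc.prems(3) m b(1,2) by (auto simp: order.order_iff_strict)
  with b m(1) show ?case by (blast intro: interval_chain_Suc)
qed

lemma bounded_poset_iff: "bounded_poset TYPE('a::order) \<longleftrightarrow> (\<exists>N. \<forall>u v::'a. \<not> interval_chain N u v)"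
proof
  assume "bounded_poset TYPE('a)"
  then obtain N where N: "\<And>C::'a set. finite C \<Longrightarrow> \<forall>x\<in>C. \<forall>y\<in>C. x \<le> y \<or> y \<le> x \<Longrightarrow> card C \<le> N + 1"
    by (auto simp: bounded_poset_def)
  have "\<not> interval_chain (Suc N) u v" for u v :: 'a
  proof
    assume "interval_chain (Suc N) u v"
    then obtain C :: "'a set" where "finite C" "card C = Suc (Suc N)" "\<forall>x\<in>C. \<forall>y\<in>C. x \<le> y \<or> y \<le> x"
      by (auto dest: interval_chain_imp_finite_chain)
    then have "card C \<le> N + 1" by (intro N)
    with \<open>card C = Suc (Suc N)\<close> show False by simp
  qed
  then show "\<exists>N. \<forall>u v::'a. \<not> interval_chain N u v" by blast
next
  assume "\<exists>N. \<forall>u v::'a. \<not> interval_chain N u v"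
  then obtain N where N: "\<And>u v::'a. \<not> interval_chain N u v" by blast
  have "card C \<le> N + 1" if C: "finite C" "\<forall>x\<in>C. \<forall>y\<in>C. x \<le> y \<or> y \<le> x" for C :: "'a set"
  proof (rule ccontr)
    assume "\<not> card C \<le> N + 1"
    then obtain m where m: "card C = Suc m" "N \<le> m" by (cases "card C") auto
    then obtain a b :: 'a where "interval_chain m a b"
      using finite_chain_imp_interval_chain[OF C(1) m(1) C(2)] by blast
    then show False using N interval_chain_mono[OF _ m(2)] by blast
  qed
  then show "bounded_poset TYPE('a)" unfolding bounded_poset_def by (intro exI[of _ N]) blast
qed

section \<open>Congruence subgroups\<close>

definition chain_supported :: "nat \<Rightarrow> ('a::order \<Rightarrow> 'a \<Rightarrow> 'k::field) set" where
  "chain_supported k = {f. \<forall>u v. f u v \<noteq> 0 \<longrightarrow> interval_chain k u v}"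

lemma chain_supportedI: "(\<And>u v. f u v \<noteq> 0 \<Longrightarrow> interval_chain k u v) \<Longrightarrow> f \<in> chain_supported k"
  by (simp add: chain_supported_def)

lemma chain_supportedD: "f \<in> chain_supported k \<Longrightarrow> f u v \<noteq> 0 \<Longrightarrow> interval_chain k u v"
  by (simp add: chain_supported_def)

lemma chain_supported_pointwise:
  assumes "f \<in> chain_supported k" "g \<in> chain_supported k" "\<And>u v. f u v = 0 \<Longrightarrow> g u v = 0 \<Longrightarrow> h u v = 0"
  shows "h \<in> chain_supported k"
proof (rule chain_supportedI)
  fix u v assume "h u v \<noteq> 0"
  then have "f u v \<noteq> 0 \<or> g u v \<noteq> 0" using assms(3) by blast
  then show "interval_chain k u v" using chain_supportedD[OF assms(1)] chain_supportedD[OF assms(2)] by blast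
qed

lemma FI_chain_supported_0: "f \<in> FI \<Longrightarrow> f \<in> chain_supported 0"
  by (rule chain_supportedI, rule interval_chain_0) (use FI_eq_0 in blast)

lemma conv_chain_supported:
  assumes "f \<in> chain_supported i" "g \<in> chain_supported j"
  shows "conv f g \<in> chain_supported (i + j)"
proof (rule chain_supportedI)
  fix u v assume "conv f g u v \<noteq> 0"
  then obtain z where "f u z \<noteq> 0" "g z v \<noteq> 0" by (rule conv_nonzeroE)
  then show "interval_chain (i + j) u v"
    using chain_supportedD[OF assms(1)] chain_supportedD[OF assms(2)] interval_chain_add by blast
qed

lemma chain_supported_mono:
  assumes "f \<in> chain_supported m" "k \<le> m" shows "f \<in> chain_supported k"
  by (rule chain_supportedI) (rule interval_chain_mono[OF chain_supportedD[OF assms(1)] assms(2)])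

definition congruence_units :: "nat \<Rightarrow> ('a::order \<Rightarrow> 'a \<Rightarrow> 'k::field) set" where
  "congruence_units k = {x \<in> carrier FI_units. (\<lambda>u v. x u v - delta u v) \<in> chain_supported k}"

lemma subgroup_congruence_units:
  "subgroup (congruence_units k :: ('a::order \<Rightarrow> 'a \<Rightarrow> 'k::field) set) FI_units"
proof
  show "congruence_units k \<subseteq> carrier FI_units"
    by (auto simp: congruence_units_def)
  show "\<one>\<^bsub>FI_units\<^esub> \<in> congruence_units k"
    using FI_units.one_closed
    by (simp add: congruence_units_def FI_units_one chain_supported_def)
next
  fix x y :: "'a \<Rightarrow> 'a \<Rightarrow> 'k" assume "x \<in> congruence_units k" "y \<in> congruence_units k"
  then have x: "x \<in> carrier FI_units" "(\<lambda>u v. x u v - delta u v) \<in> chain_supported k"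
    and y: "y \<in> carrier FI_units" "(\<lambda>u v. y u v - delta u v) \<in> chain_supported k"
    by (auto simp: congruence_units_def)
  have sum: "(\<lambda>u v. (x u v - delta u v) + (y u v - delta u v)) \<in> chain_supported k"
    by (rule chain_supported_pointwise[OF x(2) y(2)]) simp
  have prod: "conv (\<lambda>u v. x u v - delta u v) (\<lambda>u v. y u v - delta u v) \<in> chain_supported k"
    using chain_supported_mono[OF conv_chain_supported[OF x(2) y(2)]] by simp
  have expand: "conv x y u v - delta u v = (x u v - delta u v) + (y u v - delta u v)
      + conv (\<lambda>u v. x u v - delta u v) (\<lambda>u v. y u v - delta u v) u v" for u v
    by (simp add: conv_expand_at_delta[OF FI_units_in_FI[OF x(1)] FI_units_in_FI[OF y(1)]])
  have "(\<lambda>u v. conv x y u v - delta u v) \<in> chain_supported k"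
    by (rule chain_supported_pointwise[OF sum prod]) (simp add: expand)
  then show "x \<otimes>\<^bsub>FI_units\<^esub> y \<in> congruence_units k"
    using FI_units.m_closed[OF x(1) y(1)]
    by (simp add: congruence_units_def FI_units_mult)
next
  fix x :: "'a \<Rightarrow> 'a \<Rightarrow> 'k" assume "x \<in> congruence_units k"
  then have x: "x \<in> carrier FI_units" "(\<lambda>u v. x u v - delta u v) \<in> chain_supported k"
    by (auto simp: congruence_units_def)
  let ?y = "inv\<^bsub>FI_units\<^esub> x"
  have y: "?y \<in> carrier FI_units" using FI_units.inv_closed[OF x(1)] .
  have "(\<lambda>u v. delta u v - x u v) \<in> chain_supported k"
    by (rule chain_supported_pointwise[OF x(2) x(2)]) simp
  then have "conv (\<lambda>u v. delta u v - x u v) ?y \<in> chain_supported (k + 0)"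
    by (intro conv_chain_supported FI_chain_supported_0 FI_units_in_FI[OF y])
  moreover have "conv (\<lambda>u v. delta u v - x u v) ?y = (\<lambda>u v. ?y u v - delta u v)"
    using conv_diff_left[OF delta_FI FI_units_in_FI[OF x(1)] FI_units_in_FI[OF y]]
    by (simp add: conv_delta_left FI_units_in_FI[OF y] FI_units_r_inv[OF x(1)])
  ultimately show "?y \<in> congruence_units k"
    using y by (simp add: congruence_units_def)
qed

text \<open>Writing \<open>x = 1 + a\<close> and \<open>y = 1 + b\<close>, the commutator is \<open>1 + (ab - ba) x\<^sup>-\<^sup>1 y\<^sup>-\<^sup>1\<close>.\<close>

lemma commutator_congruence_units:
  assumes x: "x \<in> congruence_units k" and y: "y \<in> congruence_units (Suc 0)"
  shows "commutator FI_units x y \<in> congruence_units (Suc k)"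
proof -
  have xU: "x \<in> carrier FI_units" and yU: "y \<in> carrier FI_units"
    and a: "(\<lambda>u v. x u v - delta u v) \<in> chain_supported k"
    and b: "(\<lambda>u v. y u v - delta u v) \<in> chain_supported (Suc 0)"
    using x y by (auto simp: congruence_units_def)
  let ?a = "\<lambda>u v. x u v - delta u v" and ?b = "\<lambda>u v. y u v - delta u v"
  let ?w = "inv\<^bsub>FI_units\<^esub> x \<otimes>\<^bsub>FI_units\<^esub> inv\<^bsub>FI_units\<^esub> y"
  have w: "?w \<in> carrier FI_units" using xU yU by simp
  have xF: "x \<in> FI" and yF: "y \<in> FI" and wF: "?w \<in> FI"
    using xU yU w by (auto intro: FI_units_in_FI)
  have c: "commutator FI_units x y = conv (conv x y) ?w"
    using xU yU by (simp add: commutator_def FI_units.m_assoc flip: FI_units_mult)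
  have "conv (conv y x) ?w = delta"
    using FI_units.r_inv[OF FI_units.m_closed[OF yU xU]] FI_units.inv_mult_group[OF yU xU]
    by (simp add: FI_units_mult FI_units_one)
  then have "(\<lambda>u v. commutator FI_units x y u v - delta u v)
      = conv (\<lambda>u v. conv x y u v - conv y x u v) ?w"
    using conv_diff_left[OF conv_FI[OF xF yF] conv_FI[OF yF xF] wF] c by simp
  also have "(\<lambda>u v. conv x y u v - conv y x u v) = (\<lambda>u v. conv ?a ?b u v - conv ?b ?a u v)"
    by (simp add: fun_eq_iff conv_expand_at_delta[OF xF yF] conv_expand_at_delta[OF yF xF])
  finally have eq: "(\<lambda>u v. commutator FI_units x y u v - delta u v)
      = conv (\<lambda>u v. conv ?a ?b u v - conv ?b ?a u v) ?w" .
  have ab: "conv ?a ?b \<in> chain_supported (Suc k)" and ba: "conv ?b ?a \<in> chain_supported (Suc k)"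
    using conv_chain_supported[OF a b] conv_chain_supported[OF b a] by simp_all
  have "(\<lambda>u v. conv ?a ?b u v - conv ?b ?a u v) \<in> chain_supported (Suc k)"
    by (rule chain_supported_pointwise[OF ab ba]) simp
  then have "conv (\<lambda>u v. conv ?a ?b u v - conv ?b ?a u v) ?w \<in> chain_supported (Suc k + 0)"
    using FI_chain_supported_0[OF wF] by (rule conv_chain_supported)
  moreover have "commutator FI_units x y \<in> carrier FI_units"
    using xU yU by (simp add: commutator_def)
  ultimately show ?thesis
    using eq by (simp add: congruence_units_def)
qed

lemma congruence_units_trivial:
  "(\<And>u v::'a. \<not> interval_chain k u v) \<Longrightarrow>
     congruence_units k \<subseteq> {delta :: 'a::order \<Rightarrow> 'a \<Rightarrow> 'k::field}"
  by (auto simp: congruence_units_def chain_supported_def fun_eq_iff)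

lemma card_UNIV_eq_2_iff: "card (UNIV :: 'k::field set) = 2 \<longleftrightarrow> (\<forall>c::'k. c = 0 \<or> c = 1)"
proof
  assume card: "card (UNIV :: 'k set) = 2"
  then have "finite (UNIV :: 'k set)" using card.infinite by fastforce
  moreover have "card {0::'k, 1} = 2" by simp
  ultimately have "{0::'k, 1} = UNIV" using card card_subset_eq[of UNIV "{0::'k, 1}"] by simp
  then show "\<forall>c::'k. c = 0 \<or> c = 1" by blast
next
  assume "\<forall>c::'k. c = 0 \<or> c = 1"
  then have "(UNIV :: 'k set) = {0, 1}" by auto
  then show "card (UNIV :: 'k set) = 2" by (metis card_2_iff zero_neq_one)
qed

text \<open>Over \<open>\<bbbF>\<^sub>2\<close> every unit has diagonal \<open>1\<close>.\<close>

lemma carrier_FI_units_F2: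
  assumes "card (UNIV :: 'k::field set) = 2"
  shows "carrier (FI_units :: ('a::order \<Rightarrow> 'a \<Rightarrow> 'k) monoid) = congruence_units (Suc 0)"
proof -
  have "(\<lambda>u v. x u v - delta u v) \<in> chain_supported (Suc 0)" if x: "x \<in> carrier FI_units"
    for x :: "'a \<Rightarrow> 'a \<Rightarrow> 'k"
  proof -
    have "x u u = 1" for u
      using FI_units_diag_nonzero[OF x] assms by (auto simp: card_UNIV_eq_2_iff)
    then have "u < v" if "x u v - delta u v \<noteq> 0" for u v
      using that FI_eq_0[OF FI_units_in_FI[OF x], of u v]
      by (cases "u = v") (auto simp: delta_def order.order_iff_strict)
    then show ?thesis by (auto simp: chain_supported_def intro: interval_chain_less)
  qed
  then show ?thesis by (auto simp: congruence_units_def)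
qed

lemma lcs_FI_units_F2:
  assumes "card (UNIV :: 'k::field set) = 2"
  shows "lcs (FI_units :: ('a::order \<Rightarrow> 'a \<Rightarrow> 'k) monoid) n \<subseteq> congruence_units (Suc n)"
proof (induction n)
  case 0
  show ?case by (simp add: carrier_FI_units_F2[OF assms])
next
  case (Suc n)
  show ?case
  proof (rule FI_units.lcs_Suc_subset_subgroup[OF subgroup_congruence_units])
    fix x y :: "'a \<Rightarrow> 'a \<Rightarrow> 'k" assume "x \<in> lcs FI_units n" "y \<in> carrier FI_units"
    then show "commutator FI_units x y \<in> congruence_units (Suc (Suc n))"
      using Suc.IH by (auto simp: carrier_FI_units_F2[OF assms] intro: commutator_congruence_units)
  qed
qed

lemma nilpotent_FI_units_if_F2_bounded:
  assumes "card (UNIV :: 'k::field set) = 2" and "bounded_poset TYPE('a::order)"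
  shows "nilpotent_group (FI_units :: ('a \<Rightarrow> 'a \<Rightarrow> 'k) monoid)"
proof -
  obtain N where "\<And>u v::'a. \<not> interval_chain N u v"
    using assms(2) unfolding bounded_poset_iff by blast
  then have "\<not> interval_chain (Suc N) u v" for u v :: 'a
    using interval_chain_SucD by blast
  then have "lcs (FI_units :: ('a \<Rightarrow> 'a \<Rightarrow> 'k) monoid) N \<subseteq> {delta}"
    using lcs_FI_units_F2[OF assms(1)] congruence_units_trivial by blast
  then show ?thesis
    using FI_units.nilpotent_group_iff
    by (auto simp: FI_units_one)
qed

section \<open>Non-nilpotency of the unit group\<close>

definition diag_entry :: "'a::order \<Rightarrow> 'a \<Rightarrow> ('a \<Rightarrow> 'k::field) \<Rightarrow> 'k \<Rightarrow> 'a \<Rightarrow> 'a \<Rightarrow> 'k" where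
  "diag_entry a b p s = (\<lambda>u v. (if u = v then p u else 0) + (if u = a \<and> v = b then s else 0))"

lemma diag_entry_FI:
  assumes "a \<le> b" shows "diag_entry a b p s \<in> FI"
proof (rule FI_if_finite_off_diagonal)
  show "u \<le> v" if "diag_entry a b p s u v \<noteq> 0" for u v
    using that assms by (auto simp: diag_entry_def split: if_splits)
  show "finite {(u, v). u \<noteq> v \<and> diag_entry a b p s u v \<noteq> 0}"
    by (rule finite_subset[of _ "{(a, b)}"]) (auto simp: diag_entry_def split: if_splits)
qed

lemma conv_diag_entry:
  assumes "a < b"
  shows "conv (diag_entry a b p s) (diag_entry a b q t)
       = diag_entry a b (\<lambda>u. p u * q u) (p a * t + s * q b)"
proof (intro ext)
  fix u v :: 'a
  have "conv (diag_entry a b p s) (diag_entry a b q t) u v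
      = (\<Sum>z\<in>{u, b}. diag_entry a b p s u z * diag_entry a b q t z v)"
    using assms by (intro conv_eq_sum_row diag_entry_FI) (auto simp: diag_entry_def split: if_splits)
  also have "\<dots> = diag_entry a b (\<lambda>u. p u * q u) (p a * t + s * q b) u v"
    using assms by (cases "u = b") (auto simp: diag_entry_def algebra_simps)
  finally show "conv (diag_entry a b p s) (diag_entry a b q t) u v
      = diag_entry a b (\<lambda>u. p u * q u) (p a * t + s * q b) u v" .
qed

lemma diag_entry_unit:
  assumes "a < b" and "\<And>u. p u \<noteq> 0"
  shows "diag_entry a b p s \<in> carrier FI_units"
    and "inv\<^bsub>FI_units\<^esub> (diag_entry a b p s) = diag_entry a b (\<lambda>u. inverse (p u)) (- s / (p a * p b))"
proof -
  have one: "diag_entry a b (\<lambda>_. 1) 0 = delta"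
    by (auto simp: diag_entry_def delta_def)
  have inverse: "conv (diag_entry a b p s) (diag_entry a b (\<lambda>u. inverse (p u)) (- s / (p a * p b))) = delta"
       "conv (diag_entry a b (\<lambda>u. inverse (p u)) (- s / (p a * p b))) (diag_entry a b p s) = delta"
    using assms by (simp_all add: conv_diag_entry field_simps flip: one)
  have "a \<le> b" using assms(1) by simp
  from FI_units_inv_eq[OF diag_entry_FI[OF this] diag_entry_FI[OF this] inverse]
  show "diag_entry a b p s \<in> carrier FI_units"
    and "inv\<^bsub>FI_units\<^esub> (diag_entry a b p s) = diag_entry a b (\<lambda>u. inverse (p u)) (- s / (p a * p b))"
    by simp_all
qed

definition transvection :: "'a::order \<Rightarrow> 'a \<Rightarrow> 'k::field \<Rightarrow> 'a \<Rightarrow> 'a \<Rightarrow> 'k" where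
  "transvection a b t = diag_entry a b (\<lambda>_. 1) t"

lemma commutator_transvection_diag:
  assumes "a < b" and "(c::'k::field) \<noteq> 0"
  shows "commutator FI_units (transvection a b t) (diag_entry a b (\<lambda>u. if u = a then c else 1) 0)
       = transvection a b (t * (1 - c))"
proof -
  let ?d = "\<lambda>u. if u = a then c else (1::'k)"
  have d: "?d u \<noteq> 0" and one: "(\<lambda>_. 1::'k) u \<noteq> 0" for u
    using assms(2) by simp_all
  have "commutator FI_units (transvection a b t) (diag_entry a b ?d 0)
      = diag_entry a b (\<lambda>u. ?d u * inverse (?d u)) (t - c * t)"
    using assms(1) less_imp_neq[OF assms(1)] unfolding commutator_def transvection_def
    by (simp add: diag_entry_unit[OF assms(1) d] diag_entry_unit[OF assms(1) one]
        FI_units_mult conv_diag_entry)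
  also have "\<dots> = transvection a b (t * (1 - c))"
    using assms by (auto simp: transvection_def diag_entry_def fun_eq_iff algebra_simps)
  finally show ?thesis .
qed

lemma not_nilpotent_FI_units_if_not_F2:
  assumes "a < (b::'a::order)" and "card (UNIV :: 'k::field set) \<noteq> 2"
  shows "\<not> nilpotent_group (FI_units :: ('a \<Rightarrow> 'a \<Rightarrow> 'k) monoid)"
proof -
  obtain c :: 'k where c: "c \<noteq> 0" "c \<noteq> 1"
    using assms(2) card_UNIV_eq_2_iff by blast
  define D where "D = diag_entry a b (\<lambda>u. if u = a then c else 1) 0"
  have D: "D \<in> carrier FI_units"
    unfolding D_def using assms(1) c(1) by (intro diag_entry_unit) simp_all
  have "transvection a b ((1 - c) ^ n) \<in> lcs FI_units n" for n
  proof (induction n)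
    case 0
    show ?case
      by (simp add: transvection_def diag_entry_unit(1)[OF assms(1)])
  next
    case (Suc n)
    from commutator_in_lcs_Suc[OF Suc.IH D] show ?case
      unfolding D_def commutator_transvection_diag[OF assms(1) c(1)] by (simp add: mult.commute)
  qed
  moreover have "transvection a b ((1 - c) ^ n) \<noteq> delta" for n
  proof
    assume "transvection a b ((1 - c) ^ n) = delta"
    then have "transvection a b ((1 - c) ^ n) a b = delta a b" by simp
    then have "(1 - c) ^ n = 0"
      using assms(1) by (simp add: transvection_def diag_entry_def delta_def)
    with c(2) show False by simp
  qed
  ultimately show ?thesis
    using FI_units.nilpotent_group_iff by (auto simp: FI_units_one)
qed

definition heisenberg :: "'a::order \<Rightarrow> 'a \<Rightarrow> 'a \<Rightarrow> 'k::field \<Rightarrow> 'k \<Rightarrow> 'k \<Rightarrow> 'a \<Rightarrow> 'a \<Rightarrow> 'k" where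
  "heisenberg a b c \<alpha> \<beta> \<gamma> = (\<lambda>u v. delta u v + (if u = a \<and> v = b then \<alpha> else 0)
      + (if u = b \<and> v = c then \<beta> else 0) + (if u = a \<and> v = c then \<gamma> else 0))"

lemma heisenberg_FI:
  assumes "a < b" "b < c" shows "heisenberg a b c \<alpha> \<beta> \<gamma> \<in> FI"
proof (rule FI_if_finite_off_diagonal)
  show "u \<le> v" if "heisenberg a b c \<alpha> \<beta> \<gamma> u v \<noteq> 0" for u v
    using that assms by (auto simp: heisenberg_def delta_def split: if_splits)
  show "finite {(u, v). u \<noteq> v \<and> heisenberg a b c \<alpha> \<beta> \<gamma> u v \<noteq> 0}"
    by (rule finite_subset[of _ "{(a, b), (b, c), (a, c)}"]) (auto simp: heisenberg_def delta_def split: if_splits)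
qed

lemma conv_heisenberg:
  assumes "a < b" "b < c"
  shows "conv (heisenberg a b c \<alpha> \<beta> \<gamma>) (heisenberg a b c \<alpha>' \<beta>' \<gamma>')
       = heisenberg a b c (\<alpha> + \<alpha>') (\<beta> + \<beta>') (\<gamma> + \<gamma>' + \<alpha> * \<beta>')"
proof (intro ext)
  fix u v :: 'a
  have ne: "a \<noteq> b" "b \<noteq> c" "a \<noteq> c" using assms by auto
  have "conv (heisenberg a b c \<alpha> \<beta> \<gamma>) (heisenberg a b c \<alpha>' \<beta>' \<gamma>') u v
      = (\<Sum>z\<in>{u, b, c}. heisenberg a b c \<alpha> \<beta> \<gamma> u z * heisenberg a b c \<alpha>' \<beta>' \<gamma>' z v)"
    using assms by (intro conv_eq_sum_row heisenberg_FI) (auto simp: heisenberg_def delta_def split: if_splits)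
  also have "\<dots> = heisenberg a b c (\<alpha> + \<alpha>') (\<beta> + \<beta>') (\<gamma> + \<gamma>' + \<alpha> * \<beta>') u v"
  proof (cases "u = c")
    case True
    then have "{u, b, c} = {b, c}" by auto
    then show ?thesis using ne True by (auto simp: heisenberg_def delta_def algebra_simps)
  next
    case False
    then show ?thesis using ne by (cases "u = b") (auto simp: heisenberg_def delta_def algebra_simps)
  qed
  finally show "conv (heisenberg a b c \<alpha> \<beta> \<gamma>) (heisenberg a b c \<alpha>' \<beta>' \<gamma>') u v
      = heisenberg a b c (\<alpha> + \<alpha>') (\<beta> + \<beta>') (\<gamma> + \<gamma>' + \<alpha> * \<beta>') u v" .
qed

lemma heisenberg_unit:
  assumes "a < b" "b < c"
  shows "heisenberg a b c \<alpha> \<beta> \<gamma> \<in> carrier FI_units"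
    and "inv\<^bsub>FI_units\<^esub> (heisenberg a b c \<alpha> \<beta> \<gamma>) = heisenberg a b c (- \<alpha>) (- \<beta>) (\<alpha> * \<beta> - \<gamma>)"
proof -
  have one: "heisenberg a b c 0 0 0 = delta"
    by (auto simp: heisenberg_def)
  have "conv (heisenberg a b c \<alpha> \<beta> \<gamma>) (heisenberg a b c (- \<alpha>) (- \<beta>) (\<alpha> * \<beta> - \<gamma>)) = delta"
       "conv (heisenberg a b c (- \<alpha>) (- \<beta>) (\<alpha> * \<beta> - \<gamma>)) (heisenberg a b c \<alpha> \<beta> \<gamma>) = delta"
    using assms by (simp_all add: conv_heisenberg algebra_simps flip: one)
  from FI_units_inv_eq[OF heisenberg_FI[OF assms] heisenberg_FI[OF assms] this]
  show "heisenberg a b c \<alpha> \<beta> \<gamma> \<in> carrier FI_units"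
    and "inv\<^bsub>FI_units\<^esub> (heisenberg a b c \<alpha> \<beta> \<gamma>) = heisenberg a b c (- \<alpha>) (- \<beta>) (\<alpha> * \<beta> - \<gamma>)"
    by simp_all
qed

lemma commutator_transvection:
  assumes "a < b" "b < c"
  shows "commutator FI_units (transvection a b 1) (transvection b c 1)
       = (transvection a c 1 :: 'a::order \<Rightarrow> 'a \<Rightarrow> 'k::field)"
proof -
  have "transvection a b 1 = (heisenberg a b c 1 0 0 :: 'a \<Rightarrow> 'a \<Rightarrow> 'k)"
    and "transvection b c 1 = (heisenberg a b c 0 1 0 :: 'a \<Rightarrow> 'a \<Rightarrow> 'k)"
    and "transvection a c 1 = (heisenberg a b c 0 0 1 :: 'a \<Rightarrow> 'a \<Rightarrow> 'k)"
    using assms by (auto simp: transvection_def diag_entry_def heisenberg_def delta_def fun_eq_iff)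
  then show ?thesis
    using assms by (simp add: commutator_def heisenberg_unit FI_units_mult conv_heisenberg)
qed

lemma interval_chain_transvection_lcs:
  "interval_chain (Suc n) a b \<Longrightarrow>
     \<exists>a'. a' < b \<and> (transvection a' b 1 :: 'a::order \<Rightarrow> 'a \<Rightarrow> 'k::field) \<in> lcs FI_units n"
proof (induction n arbitrary: b)
  case 0
  then obtain w where "w < b" by (cases rule: interval_chain.cases) auto
  then have "transvection w b 1 \<in> carrier FI_units"
    by (simp add: transvection_def diag_entry_unit(1))
  with \<open>w < b\<close> show ?case by auto
next
  case (Suc n)
  from Suc.prems obtain w where w: "interval_chain (Suc n) a w" "w < b"
    by (cases rule: interval_chain.cases) auto
  then obtain a' where a': "a' < w" "(transvection a' w 1 :: 'a \<Rightarrow> 'a \<Rightarrow> 'k) \<in> lcs FI_units n"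
    using Suc.IH by blast
  have "transvection w b 1 \<in> carrier FI_units"
    using w(2) by (simp add: transvection_def diag_entry_unit(1))
  then have "(transvection a' b 1 :: 'a \<Rightarrow> 'a \<Rightarrow> 'k) \<in> lcs FI_units (Suc n)"
    using commutator_in_lcs_Suc[OF a'(2)] commutator_transvection[OF a'(1) w(2)] by metis
  with a'(1) w(2) show ?case by (blast intro: order.strict_trans)
qed

lemma not_nilpotent_FI_units_if_unbounded:
  assumes "\<not> bounded_poset TYPE('a::order)"
  shows "\<not> nilpotent_group (FI_units :: ('a \<Rightarrow> 'a \<Rightarrow> 'k::field) monoid)"
proof -
  have "\<exists>g \<in> lcs (FI_units :: ('a \<Rightarrow> 'a \<Rightarrow> 'k) monoid) n. g \<noteq> delta" for n
  proof -
    obtain a b :: 'a where "interval_chain (Suc n) a b"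
      using assms unfolding bounded_poset_iff by blast
    then obtain a' where "a' < b" "(transvection a' b 1 :: 'a \<Rightarrow> 'a \<Rightarrow> 'k) \<in> lcs FI_units n"
      using interval_chain_transvection_lcs by blast
    moreover from \<open>a' < b\<close> have "(transvection a' b 1 :: 'a \<Rightarrow> 'a \<Rightarrow> 'k) a' b \<noteq> delta a' b"
      by (simp add: transvection_def diag_entry_def delta_def)
    ultimately show ?thesis by metis
  qed
  then show ?thesis
    using FI_units.nilpotent_group_iff by (auto simp: FI_units_one)
qed

section \<open>Antichains\<close>

lemma not_antichain_type_iff: "\<not> antichain_type TYPE('a::order) \<longleftrightarrow> (\<exists>a b::'a. a < b)"
  by (auto simp: antichain_type_def order.strict_iff_order)

lemma conv_commute_if_antichain:
  assumes "antichain_type TYPE('a::order)" "f \<in> FI" "g \<in> FI"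
  shows "conv f g = conv g (f :: 'a \<Rightarrow> 'a \<Rightarrow> 'k::field)"
proof (intro ext)
  fix u v :: 'a
  have diag: "h \<in> FI \<Longrightarrow> h x y = (if x = y then h x x else 0)" for h :: "'a \<Rightarrow> 'a \<Rightarrow> 'k" and x y
    using assms(1) FI_eq_0[of h x y] by (auto simp: antichain_type_def)
  have row: "{z. u \<le> z \<and> z \<le> v \<and> h u z \<noteq> 0} \<subseteq> {u}" for h :: "'a \<Rightarrow> 'a \<Rightarrow> 'k"
    using assms(1) by (auto simp: antichain_type_def)
  have "conv f g u v = f u u * g u v" "conv g f u v = g u u * f u v"
    using conv_eq_sum_row[OF assms(2,3) _ row[of f]] conv_eq_sum_row[OF assms(3,2) _ row[of g]]
    by simp_all
  then show "conv f g u v = conv g f u v"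
    using diag[OF assms(2), of u v] diag[OF assms(3), of u v] by (simp split: if_splits)
qed

lemma nilpotent_FI_units_if_antichain:
  assumes "antichain_type TYPE('a::order)"
  shows "nilpotent_group (FI_units :: ('a \<Rightarrow> 'a \<Rightarrow> 'k::field) monoid)"
proof -
  interpret comm_group "FI_units :: ('a \<Rightarrow> 'a \<Rightarrow> 'k) monoid"
  proof (rule FI_units.group_comm_groupI)
    fix x y :: "'a \<Rightarrow> 'a \<Rightarrow> 'k" assume "x \<in> carrier FI_units" "y \<in> carrier FI_units"
    then show "x \<otimes>\<^bsub>FI_units\<^esub> y = y \<otimes>\<^bsub>FI_units\<^esub> x"
      using conv_commute_if_antichain[OF assms FI_units_in_FI FI_units_in_FI] by (simp add: FI_units_mult)
  qed
  show ?thesis by (rule nilpotent_group)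
qed

section \<open>The Lie algebra\<close>

lemma kspan_subset_zero:
  assumes "S \<subseteq> {\<lambda>_ _. 0}" shows "kspan S \<subseteq> {\<lambda>_ _. 0}"
proof
  fix t assume "t \<in> kspan S"
  then show "t \<in> {\<lambda>_ _. 0}" using assms by (induction rule: kspan.induct) auto
qed

lemma lie_nilpotent_if_antichain:
  assumes "antichain_type TYPE('a::order)"
  shows "lie_nilpotent_FI TYPE('a) TYPE('k::field)"
proof -
  have "(\<lambda>x y. conv f g x y - conv g f x y) = (\<lambda>_ _. 0 :: 'k)" if "f \<in> FI" "g \<in> FI"
    for f g :: "'a \<Rightarrow> 'a \<Rightarrow> 'k"
    using conv_commute_if_antichain[OF assms that] by simp
  then have "(lie_gamma (Suc 0) :: ('a \<Rightarrow> 'a \<Rightarrow> 'k) set) \<subseteq> {\<lambda>_ _. 0}"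
    by (auto intro!: kspan_subset_zero)
  then have "(lie_gamma (Suc 0) :: ('a \<Rightarrow> 'a \<Rightarrow> 'k) set) = {\<lambda>_ _. 0}"
    using kspan_zero by auto
  then show ?thesis unfolding lie_nilpotent_FI_def by blast
qed

definition matrix_unit :: "'a \<Rightarrow> 'a \<Rightarrow> 'a \<Rightarrow> 'a \<Rightarrow> 'k::field" where
  "matrix_unit a b = (\<lambda>u v. if u = a \<and> v = b then 1 else 0)"

lemma matrix_unit_FI: "a \<le> b \<Longrightarrow> matrix_unit a b \<in> FI"
  by (rule FI_if_finite_off_diagonal, simp add: matrix_unit_def split: if_splits)
    (rule finite_subset[of _ "{(a, b)}"], auto simp: matrix_unit_def split: if_splits)

lemma conv_matrix_unit:
  assumes "a \<le> b" "c \<le> d"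
  shows "conv (matrix_unit a b) (matrix_unit c d) = (if b = c then matrix_unit a d else (\<lambda>_ _. 0))"
proof (intro ext)
  fix u v :: 'a
  have "conv (matrix_unit a b) (matrix_unit c d) u v = (\<Sum>z\<in>{b}. matrix_unit a b u z * matrix_unit c d z v)"
    using assms by (intro conv_eq_sum_row matrix_unit_FI) (auto simp: matrix_unit_def split: if_splits)
  also have "\<dots> = (if b = c then matrix_unit a d else (\<lambda>_ _. 0)) u v"
    by (auto simp: matrix_unit_def)
  finally show "conv (matrix_unit a b) (matrix_unit c d) u v = (if b = c then matrix_unit a d else (\<lambda>_ _. 0)) u v" .
qed

lemma matrix_unit_in_lie_gamma:
  assumes "a < b"
  shows "(matrix_unit a b :: 'a::order \<Rightarrow> 'a \<Rightarrow> 'k::field) \<in> lie_gamma n"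
proof (induction n)
  case 0
  show ?case using assms by (simp add: matrix_unit_FI)
next
  case (Suc n)
  have "(matrix_unit a b :: 'a \<Rightarrow> 'a \<Rightarrow> 'k)
      = (\<lambda>x y. conv (matrix_unit a b) (matrix_unit b b) x y - conv (matrix_unit b b) (matrix_unit a b) x y)"
    using assms less_imp_neq[OF assms] by (simp add: conv_matrix_unit)
  moreover have "matrix_unit b b \<in> FI" by (simp add: matrix_unit_FI)
  ultimately have "matrix_unit a b
      \<in> {(\<lambda>x y. conv f g x y - conv g f x y) | f g. f \<in> lie_gamma n \<and> g \<in> (FI :: ('a \<Rightarrow> 'a \<Rightarrow> 'k) set)}"
    using Suc.IH unfolding mem_Collect_eq by blast
  from kspan_step[OF this kspan_zero, of 1] show ?case by simp
qed

lemma not_lie_nilpotent_if_less: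
  assumes "a < (b::'a::order)"
  shows "\<not> lie_nilpotent_FI TYPE('a) TYPE('k::field)"
proof -
  have "(matrix_unit a b :: 'a \<Rightarrow> 'a \<Rightarrow> 'k) \<noteq> (\<lambda>_ _. 0)"
    by (auto simp: matrix_unit_def fun_eq_iff)
  then have "(lie_gamma n :: ('a \<Rightarrow> 'a \<Rightarrow> 'k) set) \<noteq> {\<lambda>_ _. 0}" for n
    using matrix_unit_in_lie_gamma[OF assms, of n] by blast
  then show ?thesis unfolding lie_nilpotent_FI_def by blast
qed

theorem corollary1p9:
  shows "(lie_nilpotent_FI TYPE('a::order) TYPE('k::field) \<longleftrightarrow> antichain_type TYPE('a)) \<and>
         (nilpotent_group (units_of (FI_monoid :: ('a \<Rightarrow> 'a \<Rightarrow> 'k) monoid)) \<longleftrightarrow>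
           (antichain_type TYPE('a) \<or> (card (UNIV :: 'k set) = 2 \<and> bounded_poset TYPE('a))))"
proof (intro conjI iffI)
  show "antichain_type TYPE('a)" if "lie_nilpotent_FI TYPE('a) TYPE('k)"
    using that not_lie_nilpotent_if_less not_antichain_type_iff by blast
  show "lie_nilpotent_FI TYPE('a) TYPE('k)" if "antichain_type TYPE('a)"
    using that by (rule lie_nilpotent_if_antichain)
  show "antichain_type TYPE('a) \<or> card (UNIV :: 'k set) = 2 \<and> bounded_poset TYPE('a)"
    if "nilpotent_group (FI_units :: ('a \<Rightarrow> 'a \<Rightarrow> 'k) monoid)"
    using that not_antichain_type_iff not_nilpotent_FI_units_if_not_F2 not_nilpotent_FI_units_if_unbounded
    by blast
  show "nilpotent_group (FI_units :: ('a \<Rightarrow> 'a \<Rightarrow> 'k) monoid)"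
    if "antichain_type TYPE('a) \<or> card (UNIV :: 'k set) = 2 \<and> bounded_poset TYPE('a)"
    using that nilpotent_FI_units_if_antichain nilpotent_FI_units_if_F2_bounded by blast
qed

end
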